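(* Let $D$ be a digraph and $X, Y \subseteq V(D)$ such that no vertex of $X$ has an ingoing edge and no vertex of $Y$ has an outgoing edge. Let $X' \subseteq X$ be $(X,Y)$-finitely extendable in $D$. Suppose that for some finite $U \subseteq V(D) \setminus X'$ the set $X'$ is joinable to $Y \setminus U$ in $D - U$. Then $U$ can be extended by at most $|U|$ many new vertices from $X \setminus X'$ to a set $W$ (so $U \subseteq W$, $W \setminus U \subseteq X \setminus X'$, $|W \setminus U| \le |U|$) such that $X'$ is $(X \setminus W, Y \setminus W)$-finitely extendable in $D - W$.
   Context: Digraphs have no loops or parallel edges; $D - U$ denotes $D$ with the vertex set $U$ deleted. An $(A,B)$-path is a directed path whose initial vertex is in $A$, whose terminal vertex is in $B$, and which is internally disjoint from $A \cup B$; an $(A,B)$-path-system is a set of pairwise vertex-disjoint $(A,B)$-paths. $V^-(\mathcal{P})$ is the set of initial vertices of the paths in $\mathcal{P}$. In a digraph $H$, $A$ is joinable to $B$ if there is an $(A,B)$-path-system $\mathcal{P}$ in $H$ with $V^-(\mathcal{P}) = A$. For $A, B \subseteq V(H)$, a subset $A' \subseteq A$ is $(A,B)$-finitely extendable in $H$ if every $O$ with $A' \subseteq O \subseteq A$ and $|O \setminus A'| < \aleph_0$ is joinable to $B$ in $H$. *)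

theory Defs
  imports Main
begin

text \<open>A digraph is given by a (possibly infinite) vertex set V and an edge
relation E on V without loops (parallel edges are irrelevant here).\<close>
definition digraph :: "'a set \<Rightarrow> ('a \<times> 'a) set \<Rightarrow> bool" where
  "digraph V E \<longleftrightarrow> E \<subseteq> V \<times> V \<and> (\<forall>v. (v, v) \<notin> E)"

definition del_verts :: "('a \<times> 'a) set \<Rightarrow> 'a set \<Rightarrow> ('a \<times> 'a) set" where
  "del_verts E U = E \<inter> ((- U) \<times> (- U))"

definition dpath :: "'a set \<Rightarrow> ('a \<times> 'a) set \<Rightarrow> 'a list \<Rightarrow> bool" where
  "dpath V E p \<longleftrightarrow> p \<noteq> [] \<and> distinct p \<and> set p \<subseteq> V \<and>
     (\<forall>i. Suc i < length p \<longrightarrow> (p ! i, p ! Suc i) \<in> E)"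

definition AB_path :: "'a set \<Rightarrow> ('a \<times> 'a) set \<Rightarrow> 'a set \<Rightarrow> 'a set \<Rightarrow> 'a list \<Rightarrow> bool" where
  "AB_path V E A B p \<longleftrightarrow> dpath V E p \<and> hd p \<in> A \<and> last p \<in> B \<and>
     set (butlast (tl p)) \<inter> (A \<union> B) = {}"

definition AB_path_system :: "'a set \<Rightarrow> ('a \<times> 'a) set \<Rightarrow> 'a set \<Rightarrow> 'a set \<Rightarrow> 'a list set \<Rightarrow> bool" where
  "AB_path_system V E A B P \<longleftrightarrow> (\<forall>p\<in>P. AB_path V E A B p) \<and>
     (\<forall>p\<in>P. \<forall>q\<in>P. p \<noteq> q \<longrightarrow> set p \<inter> set q = {})"

definition init_verts :: "'a list set \<Rightarrow> 'a set" where
  "init_verts P = hd ` P"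

definition joinable :: "'a set \<Rightarrow> ('a \<times> 'a) set \<Rightarrow> 'a set \<Rightarrow> 'a set \<Rightarrow> bool" where
  "joinable V E A B \<longleftrightarrow> (\<exists>P. AB_path_system V E A B P \<and> init_verts P = A)"

definition fin_extendable :: "'a set \<Rightarrow> ('a \<times> 'a) set \<Rightarrow> 'a set \<Rightarrow> 'a set \<Rightarrow> 'a set \<Rightarrow> bool" where
  "fin_extendable V E A B A' \<longleftrightarrow> A' \<subseteq> A \<and>
     (\<forall>S. A' \<subseteq> S \<and> S \<subseteq> A \<and> finite (S - A') \<longrightarrow> joinable V E S B)"

end

theory Submission
  imports Defs
begin

(* Since X consists of sources and Y of sinks, an (S,Y)-path with S \<subseteq> X is just a directed
   path from S to Y, and a vertex of X can only occur on it as its first vertex.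
   Deleting a finite set U destroys at most |U| paths of a linkage.  A Pym-type augmenting
   step (follow the path of a second linkage until it meets the first one, then reroute along
   the path met) lets us re-insert the lost vertices of X', each at the price of at most one
   vertex of a finite extension H of X'.  Hence every finite H \<subseteq> X - X' - U contains all
   but at most |U| vertices of a set H' such that X' \<union> H' is joinable to Y - U in D - U.
   Joinability is inherited by subsets, so a compactness argument for hitting sets yields a
   single set Z \<subseteq> X - X' - U with |Z| \<le> |U| meeting every finite set whose union with X'
   is not joinable; W = U \<union> Z works, because vertices of Z \<subseteq> X can only start paths. *)

lemma set_take_disjoint_dropWhile_neq:
  assumes "distinct xs" "v \<notin> set (take k xs)"
  shows "set (take k xs) \<inter> set (dropWhile (\<lambda>x. x \<noteq> v) xs) = {}"
  using assms
  by (induction xs arbitrary: k) (auto simp: take_Cons' split: if_splits dest: set_dropWhileD)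

lemma eventually_const_if_eventually_Suc_eq:
  assumes "\<forall>\<^sub>F n in sequentially. f (Suc n) = f n"
  shows "\<exists>c. \<forall>\<^sub>F n in sequentially. f n = c"
proof -
  obtain N where N: "\<And>n. n \<ge> N \<Longrightarrow> f (Suc n) = f n"
    using assms unfolding eventually_sequentially by blast
  have "f n = f N" if "n \<ge> N" for n
    using that by (induction n rule: dec_induct) (simp_all add: N)
  then show ?thesis unfolding eventually_sequentially by blast
qed

lemma mono_bounded_eventually_const:
  fixes f :: "nat \<Rightarrow> nat"
  assumes "\<And>n. f n \<le> f (Suc n)" and "\<And>n. f n \<le> b"
  shows "\<exists>N. \<forall>n\<ge>N. f n = f N"
proof -
  have fin: "finite (range f)"
    using assms(2) by (metis finite_atMost finite_subset image_subsetI atMost_iff)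
  obtain N where N: "f N = Max (range f)" using Max_in[OF fin] by auto
  have "f n = f N" if "n \<ge> N" for n
    using that N Max_ge[OF fin] lift_Suc_mono_le[of f, OF assms(1)] by (metis le_antisym rangeI)
  then show ?thesis by blast
qed

section \<open>Directed paths and linkages\<close>

lemma dpath_iff_successively:
  "dpath V E p \<longleftrightarrow> p \<noteq> [] \<and> distinct p \<and> set p \<subseteq> V \<and> successively (\<lambda>a b. (a, b) \<in> E) p"
  unfolding dpath_def successively_conv_nth by blast

lemma dpath_append_iff:
  assumes "xs \<noteq> []" "ys \<noteq> []"
  shows "dpath V E (xs @ ys) \<longleftrightarrow>
    dpath V E xs \<and> dpath V E ys \<and> set xs \<inter> set ys = {} \<and> (last xs, hd ys) \<in> E"
  using assms by (auto simp: dpath_iff_successively successively_append_iff)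

lemma dpath_append_right: "dpath V E (xs @ ys) \<Longrightarrow> ys \<noteq> [] \<Longrightarrow> dpath V E ys"
  by (auto simp: dpath_iff_successively successively_append_iff)

lemma dpath_del_verts:
  assumes "dpath V E p" "set p \<inter> U = {}"
  shows "dpath (V - U) (del_verts E U) p"
  using assms unfolding dpath_iff_successively del_verts_def
  by (auto elim!: successively_mono)

lemma del_verts_del_verts: "del_verts (del_verts E U) Z = del_verts E (U \<union> Z)"
  unfolding del_verts_def by blast

(* An (S,B)-path-system with initial vertex set S, but without the condition on inner
   vertices, which is automatic when S consists of sources and B of sinks
   (AB_path_iff_dpath below). *)
definition linkage :: "'a set \<Rightarrow> ('a \<times> 'a) set \<Rightarrow> 'a set \<Rightarrow> 'a set \<Rightarrow> 'a list set \<Rightarrow> bool" where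
  "linkage V E S B P \<longleftrightarrow> (\<forall>p\<in>P. dpath V E p \<and> hd p \<in> S \<and> last p \<in> B) \<and>
     (\<forall>p\<in>P. \<forall>q\<in>P. p \<noteq> q \<longrightarrow> set p \<inter> set q = {}) \<and> hd ` P = S"

lemma linkage_hd_inj:
  assumes "linkage V E S B P" "p \<in> P" "q \<in> P" "hd p = hd q"
  shows "p = q"
proof (rule ccontr)
  assume "p \<noteq> q"
  with assms have "set p \<inter> set q = {}" unfolding linkage_def by blast
  moreover have "p \<noteq> []" "q \<noteq> []" using assms unfolding linkage_def dpath_def by auto
  ultimately show False using assms(4) by (metis disjoint_iff hd_in_set)
qed

lemma linkage_subset:
  assumes "linkage V E S B P" "S' \<subseteq> S"
  shows "linkage V E S' B {p \<in> P. hd p \<in> S'}"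
proof -
  have "hd ` {p \<in> P. hd p \<in> S'} = S'"
    using assms unfolding linkage_def by (auto simp: image_iff)
  with assms show ?thesis unfolding linkage_def by blast
qed

lemma card_disjoint_lists_meeting_le:
  assumes disj: "\<And>p q. p \<in> P \<Longrightarrow> q \<in> P \<Longrightarrow> p \<noteq> q \<Longrightarrow> set p \<inter> set q = {}"
    and "finite U"
  shows "finite {p \<in> P. set p \<inter> U \<noteq> {}}" "card {p \<in> P. set p \<inter> U \<noteq> {}} \<le> card U"
proof -
  define K where "K = {p \<in> P. set p \<inter> U \<noteq> {}}"
  define hit where "hit p = (SOME u. u \<in> set p \<inter> U)" for p
  have hit: "hit p \<in> set p \<inter> U" if pK: "p \<in> K" for p
  proof -
    obtain u where "u \<in> set p \<inter> U" using pK unfolding K_def by blast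
    then show ?thesis unfolding hit_def by (rule someI)
  qed
  have inj: "inj_on hit K"
  proof
    fix p q assume pq: "p \<in> K" "q \<in> K" "hit p = hit q"
    have "hit p \<in> set p \<inter> set q" using hit[OF pq(1)] hit[OF pq(2)] pq(3) by simp
    then show "p = q" using disj[of p q] pq(1,2) unfolding K_def by blast
  qed
  have hit_U: "hit ` K \<subseteq> U" using hit by blast
  show "finite K" using finite_imageD[OF finite_subset[OF hit_U \<open>finite U\<close>] inj] .
  show "card K \<le> card U" using card_image[OF inj] card_mono[OF \<open>finite U\<close> hit_U] by simp
qed

lemma linkage_del_verts:
  assumes P: "linkage V E S B P" and "finite U"
  shows "\<exists>T\<subseteq>S. finite T \<and> card T \<le> card U \<and>
           (\<exists>R. linkage (V - U) (del_verts E U) (S - T) (B - U) R)"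
proof -
  have paths: "\<And>p. p \<in> P \<Longrightarrow> dpath V E p \<and> hd p \<in> S \<and> last p \<in> B"
    and disj: "\<And>p q. p \<in> P \<Longrightarrow> q \<in> P \<Longrightarrow> p \<noteq> q \<Longrightarrow> set p \<inter> set q = {}"
    and hds: "hd ` P = S"
    using P unfolding linkage_def by auto
  define K where "K = {p \<in> P. set p \<inter> U \<noteq> {}}"
  have "finite K" "card K \<le> card U"
    using card_disjoint_lists_meeting_le[OF disj \<open>finite U\<close>] unfolding K_def by blast+
  then have "finite (hd ` K)" "card (hd ` K) \<le> card U"
    using card_image_le[OF \<open>finite K\<close>, of hd] by simp_all
  moreover have "hd ` K \<subseteq> S" using hds unfolding K_def by blast
  moreover have "linkage (V - U) (del_verts E U) (S - hd ` K) (B - U) (P - K)"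
  proof -
    have "hd ` (P - K) = S - hd ` K"
      using hds linkage_hd_inj[OF P] unfolding K_def by blast
    moreover have "dpath (V - U) (del_verts E U) p \<and> last p \<in> B - U" if "p \<in> P - K" for p
    proof -
      have "dpath V E p" "last p \<in> B" "set p \<inter> U = {}" using that paths[of p] unfolding K_def by auto
      moreover have "last p \<in> set p" using \<open>dpath V E p\<close> unfolding dpath_def by simp
      ultimately show ?thesis using dpath_del_verts by blast
    qed
    ultimately show ?thesis
      using paths disj unfolding linkage_def by blast
  qed
  ultimately show ?thesis by blast
qed

definition path_from :: "'a list set \<Rightarrow> 'a \<Rightarrow> 'a list" where
  "path_from P x = (THE p. p \<in> P \<and> hd p = x)"

lemma path_from:
  assumes "linkage V E S B P" "x \<in> S"
  shows "path_from P x \<in> P" "hd (path_from P x) = x"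
proof -
  have "\<exists>!p. p \<in> P \<and> hd p = x"
    using assms linkage_hd_inj[OF assms(1)] unfolding linkage_def by blast
  from theI'[OF this] show "path_from P x \<in> P" "hd (path_from P x) = x"
    unfolding path_from_def by auto
qed

lemma path_from_dpath:
  assumes "linkage V E S B P" "x \<in> S"
  shows "dpath V E (path_from P x)" "last (path_from P x) \<in> B"
  using path_from[OF assms] assms(1) unfolding linkage_def by auto

lemma path_from_disjoint:
  assumes "linkage V E S B P" "x \<in> S" "y \<in> S" "x \<noteq> y"
  shows "set (path_from P x) \<inter> set (path_from P y) = {}"
  using path_from[OF assms(1,2)] path_from[OF assms(1,3)] assms unfolding linkage_def by metis

definition linkage_map :: "'a set \<Rightarrow> ('a \<times> 'a) set \<Rightarrow> 'a set \<Rightarrow> ('a \<Rightarrow> 'a list option) \<Rightarrow> bool" where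
  "linkage_map V E B M \<longleftrightarrow> (\<forall>x q. M x = Some q \<longrightarrow> dpath V E q \<and> hd q = x \<and> last q \<in> B) \<and>
     (\<forall>x y q r. M x = Some q \<longrightarrow> M y = Some r \<longrightarrow> x \<noteq> y \<longrightarrow> set q \<inter> set r = {})"

lemma linkage_mapD:
  assumes "linkage_map V E B M" "M x = Some q"
  shows "dpath V E q" "hd q = x" "last q \<in> B"
  using assms unfolding linkage_map_def by auto

lemma linkage_map_disjoint:
  assumes "linkage_map V E B M" "M x = Some q" "M y = Some r" "x \<noteq> y"
  shows "set q \<inter> set r = {}"
  using assms unfolding linkage_map_def by auto

definition linked_verts :: "('a \<Rightarrow> 'a list option) \<Rightarrow> 'a set" where
  "linked_verts M = (\<Union>q\<in>ran M. set q)"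

lemma linked_verts_upd: "linked_verts (M(x \<mapsto> p)) \<subseteq> set p \<union> linked_verts M"
  unfolding linked_verts_def ran_def by auto

lemma linked_verts_delete: "linked_verts (M(x := None)) \<subseteq> linked_verts M"
  unfolding linked_verts_def ran_def by auto

lemma linkage_map_linkage:
  assumes "linkage_map V E B M"
  shows "linkage V E (dom M) B (ran M)"
proof -
  have "hd ` ran M = dom M"
    using assms unfolding linkage_map_def ran_def dom_def by force
  moreover have "set p \<inter> set q = {}" if "p \<in> ran M" "q \<in> ran M" "p \<noteq> q" for p q
    using that assms unfolding linkage_map_def ran_def by force
  ultimately show ?thesis using assms unfolding linkage_map_def linkage_def ran_def by auto
qed

lemma linkage_map_path_from:
  assumes "linkage V E S B P"
  shows "linkage_map V E B (\<lambda>x. if x \<in> S then Some (path_from P x) else None)"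
  using path_from[OF assms] path_from_dpath[OF assms] path_from_disjoint[OF assms]
  unfolding linkage_map_def by (auto split: if_splits)

lemma linkage_map_delete:
  "linkage_map V E B M \<Longrightarrow> linkage_map V E B (M(t := None))"
  unfolding linkage_map_def by (auto split: if_splits)

lemma linkage_map_insert:
  assumes "linkage_map V E B M" "dpath V E p" "hd p = x" "last p \<in> B"
    and "set p \<inter> linked_verts M = {}"
  shows "linkage_map V E B (M(x \<mapsto> p))"
proof -
  have "set p \<inter> set q = {}" if "M y = Some q" for y q
    using assms(5) that unfolding linked_verts_def ran_def by blast
  with assms(1-4) show ?thesis unfolding linkage_map_def by (auto simp: Int_commute)
qed

lemma linkage_map_limit:
  assumes "\<And>n. linkage_map V E B (M n)" and "\<And>x. \<forall>\<^sub>F n in sequentially. M n x = L x"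
  shows "linkage_map V E B L"
proof -
  have path: "dpath V E q \<and> hd q = x \<and> last q \<in> B" if "L x = Some q" for x q
  proof -
    obtain n where "M n x = L x"
      using assms(2)[of x] eventually_sequentially by auto
    with that show ?thesis using assms(1)[of n] unfolding linkage_map_def by auto
  qed
  have disjoint: "set q \<inter> set r = {}" if "L x = Some q" "L y = Some r" "x \<noteq> y" for x y q r
  proof -
    obtain n where "M n x = L x" "M n y = L y"
      using eventually_conj[OF assms(2)[of x] assms(2)[of y]] eventually_sequentially by auto
    with that show ?thesis using assms(1)[of n] unfolding linkage_map_def by auto
  qed
  from path disjoint show ?thesis unfolding linkage_map_def by blast
qed

section \<open>Sources and sinks\<close>

locale sources_sinks =
  fixes V :: "'a set" and E :: "('a \<times> 'a) set" and X Y :: "'a set"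
  assumes no_edge_into_X: "\<And>x u. x \<in> X \<Longrightarrow> (u, x) \<notin> E"
    and no_edge_out_of_Y: "\<And>y w. y \<in> Y \<Longrightarrow> (y, w) \<notin> E"
begin

lemma dpath_source_eq_hd:
  assumes "dpath V E p" "x \<in> set p" "x \<in> X"
  shows "x = hd p"
proof -
  obtain i where i: "i < length p" "p ! i = x" using assms(2) by (auto simp: in_set_conv_nth)
  have "i = 0"
  proof (rule ccontr)
    assume "i \<noteq> 0"
    then obtain k where "i = Suc k" by (cases i) auto
    then have "(p ! k, p ! i) \<in> E" using assms(1) i(1) unfolding dpath_def by simp
    then show False using no_edge_into_X[OF assms(3)] i(2) by blast
  qed
  then show ?thesis using i assms(1) by (simp add: hd_conv_nth dpath_def)
qed

lemma dpath_sink_eq_last: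
  assumes "dpath V E p" "y \<in> set p" "y \<in> Y"
  shows "y = last p"
proof -
  obtain i where i: "i < length p" "p ! i = y" using assms(2) by (auto simp: in_set_conv_nth)
  have "Suc i = length p"
  proof (rule ccontr)
    assume "Suc i \<noteq> length p"
    then have "(p ! i, p ! Suc i) \<in> E" using assms(1) i(1) unfolding dpath_def by simp
    then show False using no_edge_out_of_Y[OF assms(3)] i(2) by blast
  qed
  then show ?thesis using i by (metis diff_Suc_1 last_conv_nth list.size(3) nat.distinct(1))
qed

lemma AB_path_iff_dpath:
  assumes "S \<subseteq> X"
  shows "AB_path V E S Y p \<longleftrightarrow> dpath V E p \<and> hd p \<in> S \<and> last p \<in> Y"
proof
  assume p: "dpath V E p \<and> hd p \<in> S \<and> last p \<in> Y"
  then have "p \<noteq> []" "distinct p" unfolding dpath_def by auto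
  have "v \<notin> S \<union> Y" if v: "v \<in> set (butlast (tl p))" for v
  proof -
    have "v \<in> set (tl p)" using v by (rule in_set_butlastD)
    moreover have "v \<in> set (butlast p)" using v by (cases p) auto
    moreover have "hd p \<notin> set (tl p)" "last p \<notin> set (butlast p)"
      using \<open>p \<noteq> []\<close> \<open>distinct p\<close>
      by (metis distinct.simps(2) list.collapse, metis append_butlast_last_id distinct_append
          disjoint_iff list.set_intros(1))
    ultimately show ?thesis
      using p assms dpath_source_eq_hd[of p v] dpath_sink_eq_last[of p v]
      by (auto dest: list.set_sel(2) in_set_butlastD)
  qed
  then show "AB_path V E S Y p" using p unfolding AB_path_def by blast
qed (auto simp: AB_path_def)

lemma joinable_iff_linkage:
  assumes "S \<subseteq> X"
  shows "joinable V E S Y \<longleftrightarrow> (\<exists>P. linkage V E S Y P)"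
  unfolding joinable_def linkage_def AB_path_system_def init_verts_def
  using AB_path_iff_dpath[OF assms] by auto

lemma sources_sinks_del_verts: "sources_sinks (del_verts E U) X (Y - U)"
  by unfold_locales (auto simp: del_verts_def no_edge_into_X no_edge_out_of_Y)

lemma linkage_del_sources:
  assumes R: "linkage V E S Y R" and "Z \<subseteq> X" "S \<inter> Z = {}"
  shows "linkage (V - Z) (del_verts E Z) S (Y - Z) R"
proof -
  have "dpath (V - Z) (del_verts E Z) r \<and> last r \<in> Y - Z" if "r \<in> R" for r
  proof -
    have r: "dpath V E r" "hd r \<in> S" "last r \<in> Y" using R that unfolding linkage_def by auto
    then have "set r \<inter> Z = {}" using assms(2,3) dpath_source_eq_hd by blast
    moreover have "last r \<in> set r" using r(1) unfolding dpath_def by simp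
    ultimately show ?thesis using r dpath_del_verts by blast
  qed
  then show ?thesis using R unfolding linkage_def by blast
qed

end

section \<open>An augmenting search\<close>

(* The state holds a linkage map M, starting with the paths of L
   from B, and a seeker s \<in> C without a path, starting with s0.  The seeker follows its P-path
   until the first vertex already used by M; that vertex lies on the path of some t, and s takes
   the rest of it.  Then t has lost its path: if t \<in> C it becomes the next seeker, otherwise it
   is dropped and the search stops.  The counter pt x records an initial segment of the P-path
   of x that the current path of x follows; the seeker's counter grows in every step. *)
type_synonym 'a search_state = "('a \<Rightarrow> 'a list option) \<times> ('a \<Rightarrow> nat) \<times> 'a option"

locale linkage_augmentation = sources_sinks +
  fixes B C :: "'a set" and L P :: "'a list set" and s0 :: 'a
  assumes C_sources: "C \<subseteq> X"
    and linkage_B: "linkage V E B Y L" and linkage_C: "linkage V E C Y P"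
    and s0_in_C: "s0 \<in> C" and s0_notin_B: "s0 \<notin> B"
begin

definition unused_prefix :: "('a \<Rightarrow> 'a list option) \<Rightarrow> 'a \<Rightarrow> 'a list" where
  "unused_prefix M s = takeWhile (\<lambda>v. v \<notin> linked_verts M) (path_from P s)"

definition hit_vertex :: "('a \<Rightarrow> 'a list option) \<Rightarrow> 'a \<Rightarrow> 'a" where
  "hit_vertex M s = hd (dropWhile (\<lambda>v. v \<notin> linked_verts M) (path_from P s))"

definition hit_owner :: "('a \<Rightarrow> 'a list option) \<Rightarrow> 'a \<Rightarrow> 'a" where
  "hit_owner M s = (THE t. \<exists>q. M t = Some q \<and> hit_vertex M s \<in> set q)"

definition owner_suffix :: "('a \<Rightarrow> 'a list option) \<Rightarrow> 'a \<Rightarrow> 'a list" where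
  "owner_suffix M s = dropWhile (\<lambda>v. v \<noteq> hit_vertex M s) (the (M (hit_owner M s)))"

definition rerouted_path :: "('a \<Rightarrow> 'a list option) \<Rightarrow> 'a \<Rightarrow> 'a list" where
  "rerouted_path M s = unused_prefix M s @ owner_suffix M s"

fun step :: "'a search_state \<Rightarrow> 'a search_state" where
  "step (M, pt, None) = (M, pt, None)"
| "step (M, pt, Some s) =
     (if set (path_from P s) \<inter> linked_verts M = {} then (M(s \<mapsto> path_from P s), pt, None)
      else (M(hit_owner M s := None, s \<mapsto> rerouted_path M s),
            pt(s := Suc (length (unused_prefix M s))),
            if hit_owner M s \<in> C then Some (hit_owner M s) else None))"

definition good_state :: "'a search_state \<Rightarrow> bool" where
  "good_state = (\<lambda>(M, pt, seeker).
     linkage_map V E Y M \<and> (\<forall>x. pt x \<le> length (path_from P x)) \<and>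
     (\<forall>x q. M x = Some q \<longrightarrow> take (pt x) q = take (pt x) (path_from P x)) \<and>
     (case seeker of
        Some s \<Rightarrow> s \<in> C \<and> s \<in> insert s0 B \<and> dom M = insert s0 B - {s} \<and>
                 set (take (pt s) (path_from P s)) \<inter> linked_verts M = {}
      | None \<Rightarrow> dom M = insert s0 B \<or> (\<exists>t\<in>B - C. dom M = insert s0 B - {t})))"

definition initial_state :: "'a search_state" where
  "initial_state = ((\<lambda>x. if x \<in> B then Some (path_from L x) else None), (\<lambda>_. 0), Some s0)"

lemma good_initial_state: "good_state initial_state"
  using linkage_map_path_from[OF linkage_B] s0_in_C s0_notin_B
  unfolding good_state_def initial_state_def by (auto simp: dom_def)

lemma good_state_linkage_map: "good_state (M, pt, seeker) \<Longrightarrow> linkage_map V E Y M"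
  and good_state_progress_le: "good_state (M, pt, seeker) \<Longrightarrow> pt x \<le> length (path_from P x)"
  unfolding good_state_def by simp_all

lemma path_from_C:
  assumes "s \<in> C"
  shows "dpath V E (path_from P s)" "hd (path_from P s) = s" "last (path_from P s) \<in> Y"
  using path_from[OF linkage_C assms] path_from_dpath[OF linkage_C assms] by auto

context
  fixes M pt s
  assumes good: "good_state (M, pt, Some s)"
begin

lemma good_seeker_state:
  "linkage_map V E Y M" "s \<in> C" "s \<in> insert s0 B" "dom M = insert s0 B - {s}"
  "set (take (pt s) (path_from P s)) \<inter> linked_verts M = {}"
  using good unfolding good_state_def by auto

lemma seeker_not_linked: "s \<notin> linked_verts M"
proof
  assume "s \<in> linked_verts M"
  then obtain y q where "M y = Some q" "s \<in> set q" unfolding linked_verts_def ran_def by auto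
  moreover have "s \<in> X" using good_seeker_state(2) C_sources by blast
  ultimately have "M s = Some q"
    using good_seeker_state(1) dpath_source_eq_hd unfolding linkage_map_def by metis
  then show False using good_seeker_state(4) by blast
qed

lemma good_state_step_no_hit:
  assumes "set (path_from P s) \<inter> linked_verts M = {}"
  shows "good_state (step (M, pt, Some s))"
proof -
  have "linkage_map V E Y (M(s \<mapsto> path_from P s))"
    using linkage_map_insert[OF good_seeker_state(1) path_from_C[OF good_seeker_state(2)] assms] .
  moreover have "dom (M(s \<mapsto> path_from P s)) = insert s0 B" using good_seeker_state(3,4) by auto
  ultimately show ?thesis using good assms unfolding good_state_def by auto
qed

context
  assumes hit: "set (path_from P s) \<inter> linked_verts M \<noteq> {}"
begin

lemma hit_split:
  obtains rest where "path_from P s = unused_prefix M s @ rest" "rest \<noteq> []"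
    "hd rest = hit_vertex M s"
proof
  let ?rest = "dropWhile (\<lambda>v. v \<notin> linked_verts M) (path_from P s)"
  show "path_from P s = unused_prefix M s @ ?rest" unfolding unused_prefix_def by simp
  show "?rest \<noteq> []" using hit by auto
  show "hd ?rest = hit_vertex M s" unfolding hit_vertex_def ..
qed

lemma hit_vertex_linked: "hit_vertex M s \<in> linked_verts M"
  using hit hd_dropWhile[of "\<lambda>v. v \<notin> linked_verts M" "path_from P s"]
  unfolding hit_vertex_def by auto

lemma unused_prefix_nonempty: "unused_prefix M s \<noteq> []"
proof -
  have "path_from P s \<noteq> []" using path_from_C(1)[OF good_seeker_state(2)] unfolding dpath_def by simp
  then show ?thesis
    using seeker_not_linked path_from_C(2)[OF good_seeker_state(2)]
    unfolding unused_prefix_def takeWhile_eq_Nil_iff by simp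
qed

lemma unused_prefix_unlinked: "set (unused_prefix M s) \<inter> linked_verts M = {}"
  unfolding unused_prefix_def by (auto dest: set_takeWhileD)

lemma hit_owner:
  "M (hit_owner M s) = Some (the (M (hit_owner M s)))"
  "hit_vertex M s \<in> set (the (M (hit_owner M s)))"
proof -
  obtain t q where tq: "M t = Some q" "hit_vertex M s \<in> set q"
    using hit_vertex_linked unfolding linked_verts_def ran_def by auto
  have "\<exists>!t. \<exists>q. M t = Some q \<and> hit_vertex M s \<in> set q"
    using tq good_seeker_state(1) unfolding linkage_map_def by blast
  from theI'[OF this] show "M (hit_owner M s) = Some (the (M (hit_owner M s)))"
    "hit_vertex M s \<in> set (the (M (hit_owner M s)))"
    unfolding hit_owner_def by auto
qed

lemma hit_owner_neq_seeker: "hit_owner M s \<noteq> s"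
  using hit_owner(1) good_seeker_state(4) by auto

lemma linked_verts_without_owner:
  "linked_verts (M(hit_owner M s := None)) \<inter> set (the (M (hit_owner M s))) = {}"
proof -
  have "set r \<inter> set (the (M (hit_owner M s))) = {}" if "(M(hit_owner M s := None)) y = Some r" for y r
    using that linkage_map_disjoint[OF good_seeker_state(1) _ hit_owner(1), of y r] by (auto split: if_splits)
  then show ?thesis unfolding linked_verts_def ran_def by blast
qed

lemma owner_suffix:
  "owner_suffix M s \<noteq> []" "hd (owner_suffix M s) = hit_vertex M s"
  "dpath V E (owner_suffix M s)" "last (owner_suffix M s) \<in> Y"
  "set (owner_suffix M s) \<subseteq> set (the (M (hit_owner M s)))"
proof -
  let ?v = "hit_vertex M s" and ?q = "the (M (hit_owner M s))"
  have q: "dpath V E ?q" "last ?q \<in> Y"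
    using linkage_mapD[OF good_seeker_state(1) hit_owner(1)] by simp_all
  show ne: "owner_suffix M s \<noteq> []" "hd (owner_suffix M s) = ?v"
    using hit_owner(2) hd_dropWhile[of "\<lambda>v. v \<noteq> ?v" ?q] unfolding owner_suffix_def by auto
  have "dpath V E (takeWhile (\<lambda>v. v \<noteq> ?v) ?q @ owner_suffix M s)"
    unfolding owner_suffix_def using q(1) by simp
  then show "dpath V E (owner_suffix M s)" using dpath_append_right ne(1) by blast
  have "last (owner_suffix M s) = last ?q"
    using last_appendR[OF ne(1), of "takeWhile (\<lambda>v. v \<noteq> ?v) ?q"] unfolding owner_suffix_def by simp
  then show "last (owner_suffix M s) \<in> Y" using q(2) by simp
  show "set (owner_suffix M s) \<subseteq> set ?q"
    unfolding owner_suffix_def by (auto dest: set_dropWhileD)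
qed

lemma rerouted_path:
  "dpath V E (rerouted_path M s)" "hd (rerouted_path M s) = s" "last (rerouted_path M s) \<in> Y"
proof -
  obtain rest where p: "path_from P s = unused_prefix M s @ rest" "rest \<noteq> []"
    "hd rest = hit_vertex M s"
    using hit_split .
  have pre: "unused_prefix M s \<noteq> []" "set (unused_prefix M s) \<inter> linked_verts M = {}"
    using unused_prefix_nonempty unused_prefix_unlinked .
  have "dpath V E (unused_prefix M s)" "(last (unused_prefix M s), hit_vertex M s) \<in> E"
    using path_from_C(1)[OF good_seeker_state(2)] dpath_append_iff[OF pre(1) p(2)] p(1,3)
    by simp_all
  moreover have "set (unused_prefix M s) \<inter> set (owner_suffix M s) = {}"
    using pre(2) owner_suffix(5) hit_owner(1) by (auto simp: linked_verts_def ran_def)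
  ultimately show "dpath V E (rerouted_path M s)"
    unfolding rerouted_path_def dpath_append_iff[OF pre(1) owner_suffix(1)] owner_suffix(2)
    using owner_suffix(3) by blast
  show "hd (rerouted_path M s) = s"
    using pre(1) p(1) path_from_C(2)[OF good_seeker_state(2)] unfolding rerouted_path_def by simp
  show "last (rerouted_path M s) \<in> Y"
    unfolding rerouted_path_def using owner_suffix(1,4) by simp
qed

lemma rerouted_path_unlinked:
  "set (rerouted_path M s) \<inter> linked_verts (M(hit_owner M s := None)) = {}"
  using unused_prefix_unlinked linked_verts_delete[of M "hit_owner M s"]
    linked_verts_without_owner owner_suffix(5)
  unfolding rerouted_path_def by auto

lemma take_rerouted_path:
  "take (Suc (length (unused_prefix M s))) (rerouted_path M s) =
     take (Suc (length (unused_prefix M s))) (path_from P s)"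
proof -
  obtain rest where p: "path_from P s = unused_prefix M s @ rest" "rest \<noteq> []"
    "hd rest = hit_vertex M s"
    using hit_split .
  have "take 1 (owner_suffix M s) = [hit_vertex M s]"
    using owner_suffix(1,2) by (cases "owner_suffix M s") auto
  moreover have "take 1 rest = [hit_vertex M s]" using p(2,3) by (cases rest) auto
  ultimately show ?thesis unfolding rerouted_path_def p(1) by simp
qed

lemma progress_le_unused_prefix: "pt s \<le> length (unused_prefix M s)"
proof (rule ccontr)
  assume "\<not> pt s \<le> length (unused_prefix M s)"
  then obtain k where k: "pt s = Suc (length (unused_prefix M s) + k)"
    by (metis less_iff_Suc_add not_le)
  obtain rest where p: "path_from P s = unused_prefix M s @ rest" "rest \<noteq> []"
    "hd rest = hit_vertex M s"
    using hit_split .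
  have "hit_vertex M s \<in> set (take (pt s) (path_from P s))"
    unfolding k p(1) using p(2,3) by (cases rest) simp_all
  then show False using good_seeker_state(5) hit_vertex_linked by blast
qed


lemma next_seeker_prefix_unlinked:
  assumes "hit_owner M s \<in> C"
  shows "set (take (pt (hit_owner M s)) (path_from P (hit_owner M s))) \<inter>
           linked_verts (M(hit_owner M s := None, s \<mapsto> rerouted_path M s)) = {}"
proof -
  let ?t = "hit_owner M s" and ?v = "hit_vertex M s" and ?pre = "unused_prefix M s"
  let ?q = "the (M ?t)"
  let ?prefix = "take (pt ?t) ?q"
  have prefix: "?prefix = take (pt ?t) (path_from P ?t)"
    using good hit_owner(1) unfolding good_state_def by auto
  have disjoint: "set (path_from P ?t) \<inter> set (path_from P s) = {}"
    using path_from_disjoint[OF linkage_C assms good_seeker_state(2) hit_owner_neq_seeker] .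
  obtain rest where p: "path_from P s = ?pre @ rest" "rest \<noteq> []" "hd rest = ?v"
    using hit_split .
  then have "?v \<in> set (path_from P s)" by (metis Un_iff hd_in_set set_append)
  then have "?v \<notin> set ?prefix" using prefix disjoint by (auto dest: in_set_takeD)
  moreover have "distinct ?q" using linkage_mapD(1)[OF good_seeker_state(1) hit_owner(1)] unfolding dpath_def by simp
  ultimately have "set ?prefix \<inter> set (owner_suffix M s) = {}"
    unfolding owner_suffix_def by (rule set_take_disjoint_dropWhile_neq[rotated])
  moreover have "set ?prefix \<inter> set ?pre = {}"
    using prefix disjoint p(1) by (auto dest: in_set_takeD)
  moreover have "set ?prefix \<inter> linked_verts (M(?t := None)) = {}"
    using linked_verts_without_owner by (auto dest: in_set_takeD)
  ultimately show ?thesis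
    using linked_verts_upd[of "M(?t := None)" s "rerouted_path M s"]
    unfolding rerouted_path_def prefix[symmetric] by auto
qed

lemma good_state_step_hit: "good_state (step (M, pt, Some s))"
proof -
  let ?t = "hit_owner M s" and ?pre = "unused_prefix M s"
  let ?M' = "M(?t := None, s \<mapsto> rerouted_path M s)" and ?pt' = "pt(s := Suc (length ?pre))"
  have step: "step (M, pt, Some s) = (?M', ?pt', if ?t \<in> C then Some ?t else None)"
    using hit by simp
  have map: "linkage_map V E Y ?M'"
    using linkage_map_insert[OF linkage_map_delete[OF good_seeker_state(1)] rerouted_path
        rerouted_path_unlinked] .
  have "Suc (length ?pre) \<le> length (path_from P s)"
    using hit_split by (metis Suc_leI length_append length_greater_0_conv less_add_same_cancel1)
  then have bound: "\<forall>x. ?pt' x \<le> length (path_from P x)"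
    using good unfolding good_state_def by auto
  have agree: "\<forall>x q. ?M' x = Some q \<longrightarrow> take (?pt' x) q = take (?pt' x) (path_from P x)"
    using good take_rerouted_path unfolding good_state_def by auto
  have t: "?t \<in> insert s0 B" "?t \<noteq> s" "dom ?M' = insert s0 B - {?t}"
    using hit_owner(1) hit_owner_neq_seeker good_seeker_state(3,4) by auto
  show ?thesis
  proof (cases "?t \<in> C")
    case True
    then show ?thesis
      unfolding step good_state_def
      using map bound agree t next_seeker_prefix_unlinked by simp
  next
    case False
    then have "?t \<in> B - C" using t(1) s0_in_C by auto
    then show ?thesis
      unfolding step good_state_def using map bound agree t False by auto
  qed
qed

end

end

lemma good_state_step:
  assumes "good_state st"
  shows "good_state (step st)"
proof -
  obtain M pt seeker where st: "st = (M, pt, seeker)" by (cases st)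
  show ?thesis
  proof (cases seeker)
    case None
    then show ?thesis using assms st by simp
  next
    case (Some s)
    then have "good_state (M, pt, Some s)" using assms st by simp
    then show ?thesis
      using good_state_step_hit good_state_step_no_hit st Some by blast
  qed
qed

lemma step_progress:
  assumes good: "good_state (M, pt, Some s)" and step: "step (M, pt, Some s) = (M', pt', Some s')"
  shows "pt s < pt' s" "pt x \<le> pt' x" "x \<noteq> s \<Longrightarrow> x \<noteq> s' \<Longrightarrow> M' x = M x"
proof -
  have hit: "set (path_from P s) \<inter> linked_verts M \<noteq> {}"
    using step by (auto split: if_splits)
  then have "M' = M(hit_owner M s := None, s \<mapsto> rerouted_path M s)"
    "pt' = pt(s := Suc (length (unused_prefix M s)))" "s' = hit_owner M s"
    using step by (auto split: if_splits)
  then show "pt s < pt' s" "pt x \<le> pt' x" "x \<noteq> s \<Longrightarrow> x \<noteq> s' \<Longrightarrow> M' x = M x"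
    using progress_le_unused_prefix[OF good hit] by auto
qed

definition run :: "nat \<Rightarrow> 'a search_state" where
  "run n = (step ^^ n) initial_state"

lemma good_state_run: "good_state (run n)"
  by (induction n) (simp_all add: run_def good_initial_state good_state_step)

lemma run_Suc: "run (Suc n) = step (run n)"
  by (simp add: run_def)

definition map_at :: "nat \<Rightarrow> 'a \<Rightarrow> 'a list option" where
  "map_at n = fst (run n)"

definition progress_at :: "nat \<Rightarrow> 'a \<Rightarrow> nat" where
  "progress_at n = fst (snd (run n))"

definition seeker_at :: "nat \<Rightarrow> 'a" where
  "seeker_at n = the (snd (snd (run n)))"

(* If C is infinite the search need not stop.  Every counter is bounded, so every vertex is
   the seeker only finitely often, and the maps converge pointwise to a linkage of insert s0 B. *)
context
  assumes endless: "\<And>n. snd (snd (run n)) \<noteq> None"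
begin

lemma run_eq: "run n = (map_at n, progress_at n, Some (seeker_at n))"
  using endless[of n] unfolding map_at_def progress_at_def seeker_at_def by auto

lemma good_state_at: "good_state (map_at n, progress_at n, Some (seeker_at n))"
  using good_state_run[of n] unfolding run_eq .

lemma progress_at_Suc:
  "progress_at n (seeker_at n) < progress_at (Suc n) (seeker_at n)"
  "progress_at n x \<le> progress_at (Suc n) x"
  "seeker_at n \<noteq> x \<Longrightarrow> seeker_at (Suc n) \<noteq> x \<Longrightarrow> map_at (Suc n) x = map_at n x"
proof -
  have "step (map_at n, progress_at n, Some (seeker_at n)) =
      (map_at (Suc n), progress_at (Suc n), Some (seeker_at (Suc n)))"
    using run_Suc[of n] by (simp only: run_eq)
  from step_progress[OF good_state_at this]
  show "progress_at n (seeker_at n) < progress_at (Suc n) (seeker_at n)"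
    "progress_at n x \<le> progress_at (Suc n) x"
    "seeker_at n \<noteq> x \<Longrightarrow> seeker_at (Suc n) \<noteq> x \<Longrightarrow> map_at (Suc n) x = map_at n x"
    by auto
qed

lemma eventually_not_seeker: "\<forall>\<^sub>F n in sequentially. seeker_at n \<noteq> x"
proof -
  have "progress_at n x \<le> length (path_from P x)" for n
    using good_state_progress_le[OF good_state_at] .
  then obtain N where N: "\<forall>n\<ge>N. progress_at n x = progress_at N x"
    using mono_bounded_eventually_const[of "\<lambda>n. progress_at n x"] progress_at_Suc(2) by blast
  have "seeker_at n \<noteq> x" if "n \<ge> N" for n
    using progress_at_Suc(1)[of n] N that by (metis le_Suc_eq less_irrefl)
  then show ?thesis unfolding eventually_sequentially by blast
qed

lemma eventually_map_at_const: "\<exists>c. \<forall>\<^sub>F n in sequentially. map_at n x = c"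
proof (rule eventually_const_if_eventually_Suc_eq)
  have "\<forall>\<^sub>F n in sequentially. seeker_at n \<noteq> x \<and> seeker_at (Suc n) \<noteq> x"
    using eventually_not_seeker[of x] eventually_sequentially_Suc[of "\<lambda>n. seeker_at n \<noteq> x"]
    by (simp add: eventually_conj_iff)
  then show "\<forall>\<^sub>F n in sequentially. map_at (Suc n) x = map_at n x"
    by (rule eventually_mono) (simp add: progress_at_Suc(3))
qed

lemma linkage_of_endless_run: "\<exists>R. linkage V E (insert s0 B) Y R"
proof -
  define lim where "lim x = (SOME c. \<forall>\<^sub>F n in sequentially. map_at n x = c)" for x
  have lim: "\<forall>\<^sub>F n in sequentially. map_at n x = lim x" for x
    unfolding lim_def using eventually_map_at_const[of x] by (rule someI_ex)
  have "linkage_map V E Y lim"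
    using linkage_map_limit[OF good_state_linkage_map[OF good_state_at] lim] .
  moreover have "dom lim = insert s0 B"
  proof (rule set_eqI)
    fix x
    obtain n where n: "map_at n x = lim x" "seeker_at n \<noteq> x"
      using eventually_happens'[OF sequentially_bot eventually_conj[OF lim[of x] eventually_not_seeker[of x]]]
      by blast
    have "dom (map_at n) = insert s0 B - {seeker_at n}"
      using good_seeker_state(4)[OF good_state_at] .
    moreover have "x \<in> dom lim \<longleftrightarrow> x \<in> dom (map_at n)" using n(1) by (simp add: domIff)
    ultimately show "x \<in> dom lim \<longleftrightarrow> x \<in> insert s0 B" using n(2) by simp
  qed
  ultimately have "linkage V E (insert s0 B) Y (ran lim)"
    using linkage_map_linkage[of V E Y lim] by simp
  then show ?thesis by blast
qed

end

theorem augmentation: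
  "(\<exists>R. linkage V E (insert s0 B) Y R) \<or> (\<exists>t\<in>B - C. \<exists>R. linkage V E (insert s0 B - {t}) Y R)"
proof (cases "\<exists>n. snd (snd (run n)) = None")
  case True
  then obtain n M pt where "run n = (M, pt, None)" by (metis prod.collapse)
  then have good: "good_state (M, pt, None)" using good_state_run[of n] by simp
  then have "dom M = insert s0 B \<or> (\<exists>t\<in>B - C. dom M = insert s0 B - {t})"
    unfolding good_state_def by simp
  then show ?thesis using linkage_map_linkage[OF good_state_linkage_map[OF good]] by auto
next
  case False
  then have "snd (snd (run n)) \<noteq> None" for n by auto
  then show ?thesis using linkage_of_endless_run by blast
qed

end

section \<open>Exchanging sources of linkages\<close>

context sources_sinks
begin

lemma linkage_insert_source:
  assumes "A \<subseteq> X" "linkage V E A Y P" "linkage V E S Y R" "a \<in> A" "a \<notin> S"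
  obtains T R' where "T \<subseteq> S - A" "finite T" "card T \<le> 1" "linkage V E (insert a S - T) Y R'"
proof -
  interpret linkage_augmentation V E X Y S A R P a
    using assms by unfold_locales auto
  from augmentation show ?thesis
  proof (elim disjE exE bexE)
    fix R' assume "linkage V E (insert a S) Y R'"
    then show ?thesis using that[of "{}" R'] by simp
  next
    fix t R' assume "t \<in> S - A" "linkage V E (insert a S - {t}) Y R'"
    then show ?thesis using that[of "{t}" R'] by simp
  qed
qed

lemma linkage_exchange:
  assumes A: "A \<subseteq> X" "linkage V E A Y P"
    and S: "linkage V E S Y R" "finite (A - S)" "finite (S - A)"
  shows "\<exists>H\<subseteq>S - A. card (S - A - H) \<le> card (A - S) \<and> (\<exists>R'. linkage V E (A \<union> H) Y R')"
  using S
proof (induction "card (A - S)" arbitrary: S R)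
  case 0
  then have "A \<union> (S - A) = S" by auto
  then show ?case using "0.prems"(1) by (intro exI[of _ "S - A"]) auto
next
  case (Suc n)
  then have "A - S \<noteq> {}" by (metis card.empty nat.distinct(1))
  then obtain a where a: "a \<in> A" "a \<notin> S" by blast
  obtain T R' where T: "T \<subseteq> S - A" "finite T" "card T \<le> 1"
    and R': "linkage V E (insert a S - T) Y R'"
    using linkage_insert_source[OF A Suc.prems(1) a] .
  have "A - (insert a S - T) = A - S - {a}" "insert a S - T - A = S - A - T"
    using T(1) a by blast+
  then have "n = card (A - (insert a S - T))" "finite (A - (insert a S - T))"
    "finite (insert a S - T - A)"
    using Suc.hyps(2) Suc.prems(2,3) a by simp_all
  from Suc.hyps(1)[OF this(1) R' this(2,3)] \<open>insert a S - T - A = S - A - T\<close>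
  obtain H where H: "H \<subseteq> S - A - T" "card (S - A - T - H) \<le> card (A - (insert a S - T))"
    and linkage: "\<exists>R'. linkage V E (A \<union> H) Y R'"
    by auto
  have "S - A - H \<subseteq> T \<union> (S - A - T - H)" by blast
  then have "card (S - A - H) \<le> card T + card (S - A - T - H)"
    using Suc.prems(3) card_mono[of "T \<union> (S - A - T - H)"] card_Un_le[of T "S - A - T - H"]
    by (meson T(2) finite_Diff finite_UnI le_trans)
  also have "\<dots> \<le> card (A - S)"
    using T(3) H(2) \<open>n = card (A - (insert a S - T))\<close> Suc.hyps(2) by linarith
  finally show ?case using H(1) linkage by blast
qed

lemma linkage_after_deletion:
  assumes "X' \<subseteq> X" "finite U" "finite H" "H \<inter> X' = {}"
    and Q: "linkage V E (X' \<union> H) Y Q" and P: "linkage (V - U) (del_verts E U) X' (Y - U) P"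
  shows "\<exists>H'\<subseteq>H. card (H - H') \<le> card U \<and>
           (\<exists>R. linkage (V - U) (del_verts E U) (X' \<union> H') (Y - U) R)"
proof -
  interpret DU: sources_sinks "V - U" "del_verts E U" X "Y - U"
    by (rule sources_sinks_del_verts)
  obtain T R where T: "T \<subseteq> X' \<union> H" "finite T" "card T \<le> card U"
    and R: "linkage (V - U) (del_verts E U) (X' \<union> H - T) (Y - U) R"
    using linkage_del_verts[OF Q \<open>finite U\<close>] by blast
  have diff: "X' - (X' \<union> H - T) = X' \<inter> T" "X' \<union> H - T - X' = H - T"
    using assms(4) by blast+
  obtain H' where H': "H' \<subseteq> H - T" "card (H - T - H') \<le> card (X' \<inter> T)"
    and linkage: "\<exists>R. linkage (V - U) (del_verts E U) (X' \<union> H') (Y - U) R"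
    using DU.linkage_exchange[OF assms(1) P R] \<open>finite T\<close> \<open>finite H\<close> unfolding diff by auto
  have "H - H' = (H \<inter> T) \<union> (H - T - H')" using H'(1) by blast
  then have "card (H - H') \<le> card (H \<inter> T) + card (H - T - H')"
    by (metis card_Un_le)
  also have "\<dots> \<le> card (H \<inter> T) + card (X' \<inter> T)" using H'(2) by simp
  also have "\<dots> = card ((H \<inter> T) \<union> (X' \<inter> T))"
    using \<open>finite T\<close> assms(4) by (intro card_Un_disjoint[symmetric]) auto
  also have "\<dots> \<le> card U"
    using T card_mono[OF \<open>finite T\<close>, of "(H \<inter> T) \<union> (X' \<inter> T)"] by auto
  finally show ?thesis using H'(1) linkage by blast
qed

lemma fin_extendable_del_verts:
  assumes "X' \<subseteq> X - W" "U \<subseteq> W" "W - U \<subseteq> X"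
    and linkable: "\<And>S. X' \<subseteq> S \<Longrightarrow> S \<subseteq> X - W \<Longrightarrow> finite (S - X') \<Longrightarrow>
                     \<exists>R. linkage (V - U) (del_verts E U) S (Y - U) R"
  shows "fin_extendable (V - W) (del_verts E W) (X - W) (Y - W) X'"
  unfolding fin_extendable_def
proof (intro conjI allI impI)
  interpret DU: sources_sinks "V - U" "del_verts E U" X "Y - U"
    by (rule sources_sinks_del_verts)
  interpret DW: sources_sinks "V - W" "del_verts E W" X "Y - W"
    by (rule sources_sinks_del_verts)
  show "X' \<subseteq> X - W" by (rule assms(1))
  fix S assume S: "X' \<subseteq> S \<and> S \<subseteq> X - W \<and> finite (S - X')"
  then obtain R where "linkage (V - U) (del_verts E U) S (Y - U) R" using linkable by blast
  from DU.linkage_del_sources[OF this assms(3)] S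
  have "linkage (V - U - (W - U)) (del_verts (del_verts E U) (W - U)) S (Y - U - (W - U)) R"
    by blast
  moreover have "V - U - (W - U) = V - W" "Y - U - (W - U) = Y - W"
    "del_verts (del_verts E U) (W - U) = del_verts E W"
    using assms(2) by (auto simp: del_verts_del_verts Un_absorb1)
  moreover have "S \<subseteq> X" using S by blast
  ultimately show "joinable (V - W) (del_verts E W) S (Y - W)"
    using DW.joinable_iff_linkage by auto
qed

end

section \<open>Compactness for hitting sets\<close>

definition has_hitting_set :: "nat \<Rightarrow> 'a set set \<Rightarrow> bool" where
  "has_hitting_set k F \<longleftrightarrow> (\<exists>Z. finite Z \<and> card Z \<le> k \<and> (\<forall>b\<in>F. Z \<inter> b \<noteq> {}))"

lemma finite_hitting_sets_through_point:
  assumes "finite b0" "b0 \<in> F"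
    and hittable: "\<And>F'. finite F' \<Longrightarrow> F' \<subseteq> F \<Longrightarrow> has_hitting_set (Suc k) F'"
  shows "\<exists>c\<in>b0. \<forall>F'. finite F' \<longrightarrow> F' \<subseteq> {b \<in> F. c \<notin> b} \<longrightarrow> has_hitting_set k F'"
proof (rule ccontr)
  assume "\<not> ?thesis"
  then have "\<forall>c\<in>b0. \<exists>G. finite G \<and> G \<subseteq> {b \<in> F. c \<notin> b} \<and> \<not> has_hitting_set k G"
    by blast
  from bchoice[OF this] obtain G where G: "\<And>c. c \<in> b0 \<Longrightarrow>
      finite (G c) \<and> G c \<subseteq> {b \<in> F. c \<notin> b} \<and> \<not> has_hitting_set k (G c)"
    by blast
  let ?F = "insert b0 (\<Union>c\<in>b0. G c)"
  have "finite ?F" using G assms(1) by (simp add: finite_UN_I)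
  moreover have "?F \<subseteq> F" using G assms(2) by blast
  ultimately have "has_hitting_set (Suc k) ?F" by (rule hittable)
  then obtain Z where Z: "finite Z" "card Z \<le> Suc k" "\<forall>b\<in>?F. Z \<inter> b \<noteq> {}"
    unfolding has_hitting_set_def by blast
  then obtain c where c: "c \<in> Z" "c \<in> b0" by blast
  have "\<forall>b\<in>G c. (Z - {c}) \<inter> b \<noteq> {}" using Z(3) G[OF c(2)] c(2) by blast
  then have "has_hitting_set k (G c)"
    unfolding has_hitting_set_def using Z(1,2) c(1) by (intro exI[of _ "Z - {c}"]) auto
  then show False using G[OF c(2)] by blast
qed

lemma has_hitting_set_compactness:
  assumes "\<forall>b\<in>F. finite b"
    and "\<And>F'. finite F' \<Longrightarrow> F' \<subseteq> F \<Longrightarrow> has_hitting_set k F'"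
  shows "has_hitting_set k F"
  using assms
proof (induction k arbitrary: F)
  case 0
  have "F = {}"
  proof (rule ccontr)
    assume "F \<noteq> {}"
    then obtain b where "b \<in> F" by blast
    then have "has_hitting_set 0 {b}" using "0.prems"(2)[of "{b}"] by simp
    then show False unfolding has_hitting_set_def by (auto simp: card_eq_0_iff)
  qed
  then show ?case unfolding has_hitting_set_def by (intro exI[of _ "{}"]) simp
next
  case (Suc k)
  show ?case
  proof (cases "F = {}")
    case True
    then show ?thesis unfolding has_hitting_set_def by (intro exI[of _ "{}"]) simp
  next
    case False
    then obtain b0 where b0: "b0 \<in> F" by blast
    then obtain c where c: "c \<in> b0"
      and hittable: "\<forall>F'. finite F' \<longrightarrow> F' \<subseteq> {b \<in> F. c \<notin> b} \<longrightarrow> has_hitting_set k F'"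
      using finite_hitting_sets_through_point[OF _ b0 Suc.prems(2)] Suc.prems(1) by blast
    have "has_hitting_set k {b \<in> F. c \<notin> b}"
    proof (rule Suc.IH)
      show "\<forall>b\<in>{b \<in> F. c \<notin> b}. finite b" using Suc.prems(1) by blast
      show "has_hitting_set k G" if "finite G" "G \<subseteq> {b \<in> F. c \<notin> b}" for G
        using that hittable by blast
    qed
    then obtain Z where Z: "finite Z" "card Z \<le> k" "\<forall>b\<in>F. c \<notin> b \<longrightarrow> Z \<inter> b \<noteq> {}"
      unfolding has_hitting_set_def by blast
    have "finite (insert c Z)" "card (insert c Z) \<le> Suc k" "\<forall>b\<in>F. insert c Z \<inter> b \<noteq> {}"
      using Z by (auto simp: card_insert_if)
    then show ?thesis unfolding has_hitting_set_def by blast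
  qed
qed

lemma bounded_deletion_compactness:
  fixes J :: "'a set \<Rightarrow> bool"
  assumes down: "\<And>F F'. J F \<Longrightarrow> F' \<subseteq> F \<Longrightarrow> J F'"
    and deletion: "\<And>H. finite H \<Longrightarrow> H \<subseteq> G \<Longrightarrow> \<exists>H'\<subseteq>H. card (H - H') \<le> k \<and> J H'"
  shows "\<exists>Z\<subseteq>G. finite Z \<and> card Z \<le> k \<and> (\<forall>H. finite H \<longrightarrow> H \<subseteq> G - Z \<longrightarrow> J H)"
proof -
  define Bad where "Bad = {b. finite b \<and> b \<subseteq> G \<and> \<not> J b}"
  have "has_hitting_set k Bad"
  proof (rule has_hitting_set_compactness)
    show "\<forall>b\<in>Bad. finite b" unfolding Bad_def by blast
    fix F assume "finite F" "F \<subseteq> Bad"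
    then have H: "finite (\<Union>F)" "\<Union>F \<subseteq> G" unfolding Bad_def by auto
    then obtain H' where H': "H' \<subseteq> \<Union>F" "card (\<Union>F - H') \<le> k" "J H'"
      using deletion by blast
    have "(\<Union>F - H') \<inter> b \<noteq> {}" if "b \<in> F" for b
      using that \<open>F \<subseteq> Bad\<close> down[OF H'(3), of b] unfolding Bad_def by blast
    then show "has_hitting_set k F"
      unfolding has_hitting_set_def using H(1) H'(2) by blast
  qed
  then obtain Z where Z: "finite Z" "card Z \<le> k" "\<forall>b\<in>Bad. Z \<inter> b \<noteq> {}"
    unfolding has_hitting_set_def by blast
  have "card (Z \<inter> G) \<le> k" using Z(1,2) card_mono[OF Z(1), of "Z \<inter> G"] by simp
  moreover have "J H" if "finite H" "H \<subseteq> G - Z \<inter> G" for H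
    using that Z(3) unfolding Bad_def by blast
  ultimately show ?thesis using Z(1) by (intro exI[of _ "Z \<inter> G"]) auto
qed

section \<open>Deleting finitely many vertices\<close>

lemma (in sources_sinks) uniform_deletion_set:
  assumes ext: "fin_extendable V E X Y X'" and "finite U"
    and P: "linkage (V - U) (del_verts E U) X' (Y - U) P"
  obtains Z where "Z \<subseteq> X - X' - U" "finite Z" "card Z \<le> card U"
    "\<forall>S. X' \<subseteq> S \<longrightarrow> S \<subseteq> X - (U \<union> Z) \<longrightarrow> finite (S - X') \<longrightarrow>
       (\<exists>R. linkage (V - U) (del_verts E U) S (Y - U) R)"
proof -
  have X': "X' \<subseteq> X"
    and extend: "\<And>S. X' \<subseteq> S \<Longrightarrow> S \<subseteq> X \<Longrightarrow> finite (S - X') \<Longrightarrow> joinable V E S Y"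
    using ext unfolding fin_extendable_def by auto
  define J where "J F \<longleftrightarrow> (\<exists>R. linkage (V - U) (del_verts E U) (X' \<union> F) (Y - U) R)" for F
  have "\<exists>Z\<subseteq>X - X' - U. finite Z \<and> card Z \<le> card U \<and>
      (\<forall>H. finite H \<longrightarrow> H \<subseteq> X - X' - U - Z \<longrightarrow> J H)"
  proof (rule bounded_deletion_compactness)
    show "J F'" if "J F" "F' \<subseteq> F" for F F'
      using that linkage_subset[of "V - U" "del_verts E U" "X' \<union> F" "Y - U" _ "X' \<union> F'"]
      unfolding J_def by blast
    show "\<exists>H'\<subseteq>H. card (H - H') \<le> card U \<and> J H'" if H: "finite H" "H \<subseteq> X - X' - U" for H
    proof -
      have "finite (X' \<union> H - X')" using H(1) by (rule finite_subset[rotated]) blast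
      then have "joinable V E (X' \<union> H) Y" using extend[of "X' \<union> H"] H(2) X' by blast
      then obtain Q where "linkage V E (X' \<union> H) Y Q"
        using joinable_iff_linkage[of "X' \<union> H"] X' H(2) by auto
      from linkage_after_deletion[OF X' \<open>finite U\<close> H(1) _ this P] H(2)
      show ?thesis unfolding J_def by blast
    qed
  qed
  then obtain Z where Z: "Z \<subseteq> X - X' - U" "finite Z" "card Z \<le> card U"
    and good: "\<forall>H. finite H \<longrightarrow> H \<subseteq> X - X' - U - Z \<longrightarrow> J H"
    by blast
  show ?thesis
  proof (rule that[OF Z], intro allI impI)
    fix S assume S: "X' \<subseteq> S" "S \<subseteq> X - (U \<union> Z)" "finite (S - X')"
    then have "J (S - X')" using good by blast
    then show "\<exists>R. linkage (V - U) (del_verts E U) S (Y - U) R"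
      unfolding J_def using S(1) by (simp add: Un_absorb1)
  qed
qed

theorem lemma4p7:
  fixes V :: "'a set" and E :: "('a \<times> 'a) set" and X Y X' U :: "'a set"
  assumes "digraph V E"
    and "X \<subseteq> V" and "Y \<subseteq> V"
    and "\<forall>x\<in>X. \<forall>u. (u, x) \<notin> E"
    and "\<forall>y\<in>Y. \<forall>w. (y, w) \<notin> E"
    and "fin_extendable V E X Y X'"
    and "finite U" and "U \<subseteq> V - X'"
    and "joinable (V - U) (del_verts E U) X' (Y - U)"
  shows "\<exists>W. U \<subseteq> W \<and> W - U \<subseteq> X - X' \<and> finite W \<and> card (W - U) \<le> card U \<and>
           fin_extendable (V - W) (del_verts E W) (X - W) (Y - W) X'"
proof -
  interpret sources_sinks V E X Y using assms(4,5) by unfold_locales auto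
  interpret DU: sources_sinks "V - U" "del_verts E U" X "Y - U" by (rule sources_sinks_del_verts)
  have X': "X' \<subseteq> X" using assms(6) unfolding fin_extendable_def by blast
  obtain P where P: "linkage (V - U) (del_verts E U) X' (Y - U) P"
    using assms(9) DU.joinable_iff_linkage[OF X'] by blast
  obtain Z where Z: "Z \<subseteq> X - X' - U" "finite Z" "card Z \<le> card U"
    and linkable: "\<forall>S. X' \<subseteq> S \<longrightarrow> S \<subseteq> X - (U \<union> Z) \<longrightarrow> finite (S - X') \<longrightarrow>
      (\<exists>R. linkage (V - U) (del_verts E U) S (Y - U) R)"
    by (rule uniform_deletion_set[OF assms(6,7) P])
  have "fin_extendable (V - (U \<union> Z)) (del_verts E (U \<union> Z)) (X - (U \<union> Z)) (Y - (U \<union> Z)) X'"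
    using X' assms(8) Z(1) linkable by (intro fin_extendable_del_verts) auto
  moreover have "card (U \<union> Z - U) \<le> card Z" by (rule card_mono[OF Z(2)]) blast
  ultimately show ?thesis using Z assms(7) by (intro exI[of _ "U \<union> Z"]) auto
qed

end
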